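(* Let $X$ be an $n\times n$ Boolean matrix and define $P_0=X$ and $P_k=P_{k-1}+P_{k-1}^2+P_{k-1}^3$ for $k\ge1$. Then $X^*=I_n+P_{\lceil\log_2 n\rceil}$.
   Context: Boolean matrices have entries in $\{0,1\}$. $+$ is the entrywise OR and the product is the Boolean product. $I_n$ is the $n\times n$ identity matrix. The Kleene closure is $X^*=\sum_{k\ge0}X^k$ with $X^0=I_n$; equivalently, $X^*[x,y]=1$ iff $x=y$ or there is a directed path from $x$ to $y$ in the digraph with adjacency matrix $X$. *)

theory Defs
  imports Complex_Main
begin

text \<open>Boolean n x n matrices, indexed by a finite type 'n (so n = CARD('n) >= 1).\<close>
type_synonym 'n bmat = "'n \<Rightarrow> 'n \<Rightarrow> bool"

definition bplus :: "'n bmat \<Rightarrow> 'n bmat \<Rightarrow> 'n bmat" where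
  "bplus A B = (\<lambda>i j. A i j \<or> B i j)"

definition bmult :: "'n bmat \<Rightarrow> 'n bmat \<Rightarrow> 'n bmat" where
  "bmult A B = (\<lambda>i j. \<exists>k. A i k \<and> B k j)"

definition bid :: "'n bmat" where
  "bid = (\<lambda>i j. i = j)"

fun bpow :: "'n bmat \<Rightarrow> nat \<Rightarrow> 'n bmat" where
  "bpow A 0 = bid"
| "bpow A (Suc k) = bmult (bpow A k) A"

definition kleene :: "'n bmat \<Rightarrow> 'n bmat" where
  "kleene A = (\<lambda>i j. \<exists>k. bpow A k i j)"

fun Pseq :: "'n bmat \<Rightarrow> nat \<Rightarrow> 'n bmat" where
  "Pseq X 0 = X"
| "Pseq X (Suc k) = bplus (bplus (Pseq X k) (bpow (Pseq X k) 2)) (bpow (Pseq X k) 3)"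

end

theory Submission
  imports Defs
begin

text \<open>
  Boolean matrices are binary relations, the Boolean product is relational composition and
  Boolean powers are relation powers. Write \<open>X\<^bsup>I\<^esup>\<close> (\<open>relpowsum X I\<close>) for the sum of the
  powers \<open>X\<^sup>m\<close> with \<open>m \<in> I\<close>. Since \<open>X\<^bsup>{a..b}\<^esup> X\<^bsup>{c..d}\<^esup> = X\<^bsup>{a+c..b+d}\<^esup>\<close>, induction on k
  gives \<open>P\<^sub>k = X\<^bsup>{1..3^k}\<^esup>\<close>. A walk of length at least n visits some vertex twice and can
  be shortened, so \<open>X\<^sup>* = X\<^bsup>{0..n-1}\<^esup>\<close>. The theorem follows from
  \<open>n \<le> 2^\<lceil>log\<^sub>2 n\<rceil> \<le> 3^\<lceil>log\<^sub>2 n\<rceil>\<close>.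
\<close>

lemma bmult_eq_relcompp: "bmult A B = A OO B"
  by (auto simp: bmult_def fun_eq_iff)

lemma bid_eq: "bid = (=)"
  by (simp add: bid_def fun_eq_iff)

lemma bpow_eq_relpowp: "bpow A m = A ^^ m"
  by (induction m) (simp_all add: bid_eq bmult_eq_relcompp)

lemma kleene_eq_rtranclp: "kleene A = A\<^sup>*\<^sup>*"
  by (simp add: kleene_def bpow_eq_relpowp rtranclp_power fun_eq_iff)

definition relpowsum :: "('a \<Rightarrow> 'a \<Rightarrow> bool) \<Rightarrow> nat set \<Rightarrow> 'a \<Rightarrow> 'a \<Rightarrow> bool" where
  "relpowsum R I = (\<lambda>x y. \<exists>m\<in>I. (R ^^ m) x y)"

lemma bplus_relpowsum: "bplus (relpowsum R I) (relpowsum R J) = relpowsum R (I \<union> J)"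
  by (auto simp: bplus_def relpowsum_def fun_eq_iff)

lemma relcompp_relpowsum_atLeastAtMost:
  assumes "a \<le> b" "c \<le> d"
  shows "relpowsum R {a..b} OO relpowsum R {c..d} = relpowsum R {a + c..b + d}"
proof (intro ext iffI)
  fix x y
  assume "(relpowsum R {a..b} OO relpowsum R {c..d}) x y"
  then obtain m m' z where "m \<in> {a..b}" "m' \<in> {c..d}" "(R ^^ m) x z" "(R ^^ m') z y"
    by (auto simp: relpowsum_def)
  then show "relpowsum R {a + c..b + d} x y"
    unfolding relpowsum_def by (intro bexI[of _ "m + m'"]) (auto simp: relpowp_add)
next
  fix x y
  assume "relpowsum R {a + c..b + d} x y"
  then obtain m where m: "m \<in> {a + c..b + d}" "(R ^^ m) x y"
    by (auto simp: relpowsum_def)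
  define m\<^sub>1 where "m\<^sub>1 = min b (m - c)"
  have m\<^sub>1: "m\<^sub>1 \<le> m" "m\<^sub>1 \<in> {a..b}" "m - m\<^sub>1 \<in> {c..d}"
    using m(1) assms by (auto simp: m\<^sub>1_def)
  have "R ^^ m = R ^^ m\<^sub>1 OO R ^^ (m - m\<^sub>1)"
    using m\<^sub>1 by (simp flip: relpowp_add)
  with m(2) obtain z where "(R ^^ m\<^sub>1) x z" "(R ^^ (m - m\<^sub>1)) z y"
    by auto
  with m\<^sub>1 show "(relpowsum R {a..b} OO relpowsum R {c..d}) x y"
    unfolding relpowsum_def by blast
qed

lemma Pseq_eq_relpowsum: "Pseq X k = relpowsum X {1..3 ^ k}"
proof (induction k)
  case 0
  show ?case by (simp add: relpowsum_def eq_OO)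
next
  case (Suc k)
  define N :: nat where "N = 3 ^ k"
  have "N \<ge> 1" by (simp add: N_def)
  let ?P = "relpowsum X {1..N}"
  have "bpow ?P 2 = relpowsum X {2..2 * N}"
    using \<open>N \<ge> 1\<close> relcompp_relpowsum_atLeastAtMost[of 1 N 1 N X]
    by (simp add: bpow_eq_relpowp eq_OO numeral_2_eq_2 mult_2)
  moreover have "bpow ?P 3 = relpowsum X {3..3 * N}"
    using \<open>N \<ge> 1\<close> relcompp_relpowsum_atLeastAtMost[of 1 N 1 N X]
      relcompp_relpowsum_atLeastAtMost[of 2 "2 * N" 1 N X]
    by (simp add: bpow_eq_relpowp eq_OO numeral_3_eq_3 numeral_2_eq_2 mult_2 add.commute)
  moreover have "{1..N} \<union> {2..2 * N} \<union> {3..3 * N} = {1..3 * N}"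
    using \<open>N \<ge> 1\<close> by auto
  ultimately show ?case
    using Suc by (simp add: N_def bplus_relpowsum)
qed

lemma relpowp_shorten:
  fixes R :: "'a::finite \<Rightarrow> 'a \<Rightarrow> bool"
  assumes "(R ^^ m) x y" "card (UNIV :: 'a set) \<le> m"
  obtains m' where "m' < m" "(R ^^ m') x y"
proof -
  obtain f where f: "f 0 = x" "f m = y" "\<forall>t<m. R (f t) (f (Suc t))"
    using assms(1) relpowp_fun_conv by metis
  have "card (f ` {0..m}) \<le> card (UNIV :: 'a set)"
    by (rule card_mono) auto
  then have "\<not> inj_on f {0..m}"
    using assms(2) by (intro pigeonhole) simp
  then obtain a b where ab: "a < b" "b \<le> m" "f a = f b"
    unfolding inj_on_def by (metis atLeastAtMost_iff linorder_neqE_nat)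
  have "(R ^^ a) x (f a)"
    using f ab by (auto simp: relpowp_fun_conv)
  moreover have "(R ^^ (m - b)) (f b) y"
    unfolding relpowp_fun_conv using f ab
    by (intro exI[of _ "\<lambda>t. f (t + b)"]) auto
  ultimately have "(R ^^ (a + (m - b))) x y"
    using ab(3) by (metis relpowp_trans)
  moreover have "a + (m - b) < m"
    using ab by linarith
  ultimately show thesis
    using that by blast
qed

lemma relpowsum_mono: "I \<subseteq> J \<Longrightarrow> relpowsum R I \<le> relpowsum R J"
  by (auto simp: relpowsum_def le_fun_def)

lemma relpowsum_le_rtranclp: "relpowsum R I \<le> R\<^sup>*\<^sup>*"
  by (auto simp: relpowsum_def rtranclp_power le_fun_def)

lemma rtranclp_eq_relpowsum_lessThan_card:
  fixes R :: "'a::finite \<Rightarrow> 'a \<Rightarrow> bool"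
  shows "R\<^sup>*\<^sup>* = relpowsum R {..<card (UNIV :: 'a set)}"
proof (rule antisym[OF predicate2I relpowsum_le_rtranclp])
  fix x y
  assume "R\<^sup>*\<^sup>* x y"
  then obtain m where "(R ^^ m) x y"
    by (auto simp: rtranclp_power)
  then show "relpowsum R {..<card (UNIV :: 'a set)} x y"
  proof (induction m rule: less_induct)
    case (less m)
    show ?case
    proof (cases "m < card (UNIV :: 'a set)")
      case True
      with less.prems show ?thesis
        by (auto simp: relpowsum_def)
    next
      case False
      with less.prems obtain m' where "m' < m" "(R ^^ m') x y"
        by (auto elim: relpowp_shorten)
      with less.IH show ?thesis
        by blast
    qed
  qed
qed

lemma kleene_eq_bplus_bid_relpowsum:
  fixes X :: "('n::finite) bmat"
  assumes "card (UNIV :: 'n set) \<le> Suc N"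
  shows "kleene X = bplus bid (relpowsum X {1..N})"
proof -
  have "kleene X = X\<^sup>*\<^sup>*"
    by (fact kleene_eq_rtranclp)
  also have "\<dots> = relpowsum X {0..N}"
  proof (rule antisym[OF _ relpowsum_le_rtranclp])
    have "{..<card (UNIV :: 'n set)} \<subseteq> {0..N}"
      using assms by auto
    then show "X\<^sup>*\<^sup>* \<le> relpowsum X {0..N}"
      unfolding rtranclp_eq_relpowsum_lessThan_card by (rule relpowsum_mono)
  qed
  also have "\<dots> = bplus (relpowsum X {0}) (relpowsum X {1..N})"
    by (simp add: bplus_relpowsum atLeastAtMost_insertL)
  also have "relpowsum X {0} = bid"
    by (simp add: relpowsum_def bid_eq)
  finally show ?thesis .
qed

lemma le_2_power_ceiling_log:
  assumes "0 < n"
  shows "n \<le> 2 ^ nat \<lceil>log 2 (real n)\<rceil>"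
proof -
  have "real n = 2 powr log 2 (real n)"
    using assms by simp
  also have "\<dots> \<le> 2 powr real (nat \<lceil>log 2 (real n)\<rceil>)"
    by (intro powr_mono) linarith+
  also have "\<dots> = 2 ^ nat \<lceil>log 2 (real n)\<rceil>"
    by (simp add: powr_realpow)
  finally show ?thesis
    by (metis of_nat_le_iff of_nat_numeral of_nat_power)
qed

theorem mainTheorem11:
  fixes X :: "('n::finite) bmat"
  shows "kleene X = bplus bid (Pseq X (nat \<lceil>log 2 (real (card (UNIV :: 'n set)))\<rceil>))"
proof -
  let ?k = "nat \<lceil>log 2 (real (card (UNIV :: 'n set)))\<rceil>"
  have "card (UNIV :: 'n set) \<le> 2 ^ ?k"
    by (simp add: le_2_power_ceiling_log finite_UNIV_card_ge_0)
  also have "\<dots> \<le> 3 ^ ?k"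
    by (simp add: power_mono)
  finally have "card (UNIV :: 'n set) \<le> Suc (3 ^ ?k)"
    by simp
  then show ?thesis
    by (simp add: Pseq_eq_relpowsum kleene_eq_bplus_bid_relpowsum)
qed

end
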